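(* Let $M$ be a partial multiplication matrix whose row-column graph is a cycle, and let $\pi^\#$ be a gridded $M$-coil with points $v_1,\dots,v_n$ (ordered as in the definition of a coil). Then for every $1<i<n$, the gridded permutation $\pi^\#-v_i$ obtained by removing $v_i$ is $M$-divisible; specifically $\pi^\#-v_i=\sigma^\#\boxplus\tau^\#$, where $\sigma^\#$ and $\tau^\#$ are the gridded subpermutations on the points $v_{i+1},\dots,v_n$ and on the points $v_1,\dots,v_{i-1}$ respectively.
   Context: A gridding matrix has entries in $\{0,1,-1\}$; an $m\times n$ one has $m$ columns, $n$ rows, $M_{ij}$ in column $i$ from the left and row $j$ from the bottom. An $M$-gridding of a permutation $\pi$ of length $L$ is a choice of vertical lines $\tfrac12=v_0\le\dots\le v_m=L+\tfrac12$ and horizontal lines $\tfrac12=h_0\le\dots\le h_n=L+\tfrac12$, not through points of $\pi$, such that in each cell $C_{ij}=\{v_{i-1}<x<v_i,\ h_{j-1}<y<h_j\}$ the points of $\pi$ are absent if $M_{ij}=0$, increasing if $M_{ij}=1$, decreasing if $M_{ij}=-1$; the result is an $M$-gridded permutation. The row-column graph $G_M$ is the bipartite graph on $\{1,\dots,m\}\cup\{1',\dots,n'\}$ with edge $ij'$ iff $M_{ij}\ne0$. $M$ is a partial multiplication matrix: there are fixed $c_1,\dots,c_m,r_1,\dots,r_n\in\{\pm1\}$ with $M_{ij}=c_ir_j$ for each non-zero entry. Column $i$ is oriented left-to-right if $c_i=1$, right-to-left otherwise; row $j$ bottom-to-top if $r_j=1$, top-to-bottom otherwise. The orientation digraph of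 an $M$-gridded permutation has its points as vertices with $x\to y$ whenever $x,y$ lie in a common column of cells and $x$ precedes $y$ in that column's orientation, or in a common row of cells and $x$ precedes $y$ in that row's orientation. $M$-sum: $\sigma^\#\boxplus\tau^\#$ is the $M$-gridded permutation whose points are those of $\sigma^\#$ and $\tau^\#$, each in its cell, with the relative order among points of $\sigma^\#$ and among points of $\tau^\#$ unchanged, and such that in every column (resp. row) of cells all points of $\sigma^\#$ precede all points of $\tau^\#$ in that column's (resp. row's) orientation. $M$-divisible means equal to $\sigma^\#\boxplus\tau^\#$ with both non-empty. Let $\ell$ be the length of the cycle $G_M$. A gridded $M$-coil is an $M$-gridded permutation of length $n>\ell$ with an ordering $v_1,\dots,v_n$ of its points and a labelling of the $\ell$ non-zero cells by $1,\dots,\ell$ such that (C1) $v_i$ lies in cell $i\bmod\ell$ (residues in $\{1,\dots,\ell\}$); (C2) $v_{i-1}\to v_i$ for $1<i\le n$; (C3) $v_i\to v_{i-\ell-1}$ for $\ell+1<i\le n$; (C4) $v_{\ell+1}\to v_1$. *)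

theory Defs
  imports "HOL-Combinatorics.Permutations" Complex_Main
begin

text \<open>A gridding matrix with m columns and nr rows, M i j = entry in column i, row j
  (indices starting at 1).\<close>
definition gridding_matrix :: "nat \<Rightarrow> nat \<Rightarrow> (nat \<Rightarrow> nat \<Rightarrow> int) \<Rightarrow> bool" where
  "gridding_matrix m nr M \<longleftrightarrow> (\<forall>i\<in>{1..m}. \<forall>j\<in>{1..nr}. M i j \<in> {0, 1, -1})"

definition partial_mult_matrix ::
  "nat \<Rightarrow> nat \<Rightarrow> (nat \<Rightarrow> nat \<Rightarrow> int) \<Rightarrow> (nat \<Rightarrow> int) \<Rightarrow> (nat \<Rightarrow> int) \<Rightarrow> bool" where
  "partial_mult_matrix m nr M c r \<longleftrightarrow>
     (\<forall>i\<in>{1..m}. c i \<in> {1, -1}) \<and> (\<forall>j\<in>{1..nr}. r j \<in> {1, -1}) \<and>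
     (\<forall>i\<in>{1..m}. \<forall>j\<in>{1..nr}. M i j \<noteq> 0 \<longrightarrow> M i j = c i * r j)"

definition rc_vertices :: "nat \<Rightarrow> nat \<Rightarrow> (nat + nat) set" where
  "rc_vertices m nr = Inl ` {1..m} \<union> Inr ` {1..nr}"

definition rc_adj :: "nat \<Rightarrow> nat \<Rightarrow> (nat \<Rightarrow> nat \<Rightarrow> int) \<Rightarrow> nat + nat \<Rightarrow> nat + nat \<Rightarrow> bool" where
  "rc_adj m nr M a b \<longleftrightarrow>
     (\<exists>i\<in>{1..m}. \<exists>j\<in>{1..nr}. M i j \<noteq> 0 \<and>
        ((a = Inl i \<and> b = Inr j) \<or> (a = Inr j \<and> b = Inl i)))"

definition rc_graph_is_cycle :: "nat \<Rightarrow> nat \<Rightarrow> (nat \<Rightarrow> nat \<Rightarrow> int) \<Rightarrow> bool" where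
  "rc_graph_is_cycle m nr M \<longleftrightarrow>
     rc_vertices m nr \<noteq> {} \<and>
     (\<forall>a\<in>rc_vertices m nr. card {b. rc_adj m nr M a b} = 2) \<and>
     (\<forall>a\<in>rc_vertices m nr. \<forall>b\<in>rc_vertices m nr. (rc_adj m nr M)\<^sup>*\<^sup>* a b)"

text \<open>Non-zero cells (= edges of G_M); their number is the cycle length.\<close>
definition nz_cells :: "nat \<Rightarrow> nat \<Rightarrow> (nat \<Rightarrow> nat \<Rightarrow> int) \<Rightarrow> (nat \<times> nat) set" where
  "nz_cells m nr M = {(i, j). i \<in> {1..m} \<and> j \<in> {1..nr} \<and> M i j \<noteq> 0}"

definition cycle_length :: "nat \<Rightarrow> nat \<Rightarrow> (nat \<Rightarrow> nat \<Rightarrow> int) \<Rightarrow> nat" where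
  "cycle_length m nr M = card (nz_cells m nr M)"

text \<open>Points of a permutation \<pi> of length L are (x, \<pi> x), x \<in> {1..L}; we identify a point
  with its x-coordinate x. Vertical lines v 0..v m, horizontal lines h 0..h nr.\<close>
definition in_col :: "(nat \<Rightarrow> real) \<Rightarrow> nat \<Rightarrow> nat \<Rightarrow> bool" where
  "in_col v i x \<longleftrightarrow> v (i - 1) < real x \<and> real x < v i"

definition in_row :: "(nat \<Rightarrow> real) \<Rightarrow> (nat \<Rightarrow> nat) \<Rightarrow> nat \<Rightarrow> nat \<Rightarrow> bool" where
  "in_row h \<pi> j x \<longleftrightarrow> h (j - 1) < real (\<pi> x) \<and> real (\<pi> x) < h j"

definition in_cell :: "(nat \<Rightarrow> real) \<Rightarrow> (nat \<Rightarrow> real) \<Rightarrow> (nat \<Rightarrow> nat) \<Rightarrow> nat \<Rightarrow> nat \<Rightarrow> nat \<Rightarrow> bool" where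
  "in_cell v h \<pi> i j x \<longleftrightarrow> in_col v i x \<and> in_row h \<pi> j x"

definition gridded_perm ::
  "nat \<Rightarrow> nat \<Rightarrow> (nat \<Rightarrow> nat \<Rightarrow> int) \<Rightarrow> nat \<Rightarrow> (nat \<Rightarrow> nat) \<Rightarrow> (nat \<Rightarrow> real) \<Rightarrow> (nat \<Rightarrow> real) \<Rightarrow> bool" where
  "gridded_perm m nr M L \<pi> v h \<longleftrightarrow>
     \<pi> permutes {1..L} \<and>
     v 0 = 1/2 \<and> v m = real L + 1/2 \<and> (\<forall>i<m. v i \<le> v (Suc i)) \<and>
     h 0 = 1/2 \<and> h nr = real L + 1/2 \<and> (\<forall>j<nr. h j \<le> h (Suc j)) \<and>
     (\<forall>i\<le>m. \<forall>x\<in>{1..L}. v i \<noteq> real x) \<and>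
     (\<forall>j\<le>nr. \<forall>x\<in>{1..L}. h j \<noteq> real (\<pi> x)) \<and>
     (\<forall>i\<in>{1..m}. \<forall>j\<in>{1..nr}. \<forall>x\<in>{1..L}.
        in_cell v h \<pi> i j x \<longrightarrow> M i j \<noteq> 0) \<and>
     (\<forall>i\<in>{1..m}. \<forall>j\<in>{1..nr}. \<forall>x\<in>{1..L}. \<forall>y\<in>{1..L}.
        in_cell v h \<pi> i j x \<longrightarrow> in_cell v h \<pi> i j y \<longrightarrow> x < y \<longrightarrow>
        (M i j = 1 \<longrightarrow> \<pi> x < \<pi> y) \<and> (M i j = -1 \<longrightarrow> \<pi> y < \<pi> x))"

definition col_prec :: "(nat \<Rightarrow> int) \<Rightarrow> nat \<Rightarrow> nat \<Rightarrow> nat \<Rightarrow> bool" where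
  "col_prec c i x y \<longleftrightarrow> (if c i = 1 then x < y else y < x)"

definition row_prec :: "(nat \<Rightarrow> int) \<Rightarrow> (nat \<Rightarrow> nat) \<Rightarrow> nat \<Rightarrow> nat \<Rightarrow> nat \<Rightarrow> bool" where
  "row_prec r \<pi> j x y \<longleftrightarrow> (if r j = 1 then \<pi> x < \<pi> y else \<pi> y < \<pi> x)"

definition orient_arrow ::
  "nat \<Rightarrow> nat \<Rightarrow> (nat \<Rightarrow> int) \<Rightarrow> (nat \<Rightarrow> int) \<Rightarrow> (nat \<Rightarrow> nat) \<Rightarrow> (nat \<Rightarrow> real) \<Rightarrow> (nat \<Rightarrow> real)
   \<Rightarrow> nat \<Rightarrow> nat \<Rightarrow> bool" where
  "orient_arrow m nr c r \<pi> v h x y \<longleftrightarrow>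
     (\<exists>i\<in>{1..m}. in_col v i x \<and> in_col v i y \<and> col_prec c i x y) \<or>
     (\<exists>j\<in>{1..nr}. in_row h \<pi> j x \<and> in_row h \<pi> j y \<and> row_prec r \<pi> j x y)"

text \<open>Gridded M-coil: p k is the point v_k (k = 1..L), lab labels the non-zero cells by 1..ell.\<close>
definition gridded_coil ::
  "nat \<Rightarrow> nat \<Rightarrow> (nat \<Rightarrow> nat \<Rightarrow> int) \<Rightarrow> (nat \<Rightarrow> int) \<Rightarrow> (nat \<Rightarrow> int) \<Rightarrow> nat \<Rightarrow> (nat \<Rightarrow> nat)
   \<Rightarrow> (nat \<Rightarrow> real) \<Rightarrow> (nat \<Rightarrow> real) \<Rightarrow> (nat \<Rightarrow> nat) \<Rightarrow> (nat \<Rightarrow> nat \<times> nat) \<Rightarrow> bool" where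
  "gridded_coil m nr M c r L \<pi> v h p lab \<longleftrightarrow>
     (let ell = cycle_length m nr M; arr = orient_arrow m nr c r \<pi> v h in
     gridded_perm m nr M L \<pi> v h \<and> ell < L \<and>
     bij_betw p {1..L} {1..L} \<and>
     bij_betw lab {1..ell} (nz_cells m nr M) \<and>
     (\<forall>k\<in>{1..L}. in_cell v h \<pi> (fst (lab ((k - 1) mod ell + 1))) (snd (lab ((k - 1) mod ell + 1))) (p k)) \<and>
     (\<forall>k. 1 < k \<and> k \<le> L \<longrightarrow> arr (p (k - 1)) (p k)) \<and>
     (\<forall>k. ell + 1 < k \<and> k \<le> L \<longrightarrow> arr (p k) (p (k - ell - 1))) \<and>
     arr (p (ell + 1)) (p 1))"

text \<open>Cells and relative orders are inherited from (\<pi>, v, h), so the remaining conditions of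
  the M-sum hold automatically.\<close>
definition is_M_sum_on ::
  "nat \<Rightarrow> nat \<Rightarrow> (nat \<Rightarrow> int) \<Rightarrow> (nat \<Rightarrow> int) \<Rightarrow> (nat \<Rightarrow> nat) \<Rightarrow> (nat \<Rightarrow> real) \<Rightarrow> (nat \<Rightarrow> real)
   \<Rightarrow> nat set \<Rightarrow> nat set \<Rightarrow> nat set \<Rightarrow> bool" where
  "is_M_sum_on m nr c r \<pi> v h Q S T \<longleftrightarrow>
     S \<inter> T = {} \<and> S \<union> T = Q \<and>
     (\<forall>s\<in>S. \<forall>t\<in>T. \<forall>i\<in>{1..m}. in_col v i s \<and> in_col v i t \<longrightarrow> col_prec c i s t) \<and>
     (\<forall>s\<in>S. \<forall>t\<in>T. \<forall>j\<in>{1..nr}. in_row h \<pi> j s \<and> in_row h \<pi> j t \<longrightarrow> row_prec r \<pi> j s t)"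

definition M_divisible_on ::
  "nat \<Rightarrow> nat \<Rightarrow> (nat \<Rightarrow> int) \<Rightarrow> (nat \<Rightarrow> int) \<Rightarrow> (nat \<Rightarrow> nat) \<Rightarrow> (nat \<Rightarrow> real) \<Rightarrow> (nat \<Rightarrow> real)
   \<Rightarrow> nat set \<Rightarrow> bool" where
  "M_divisible_on m nr c r \<pi> v h Q \<longleftrightarrow>
     (\<exists>S T. S \<noteq> {} \<and> T \<noteq> {} \<and> is_M_sum_on m nr c r \<pi> v h Q S T)"

end

theory Submission
  imports Defs
begin

(* Along every line (column or row of cells) the points of a coil run backwards: a later point
   precedes an earlier, non-adjacent one in the orientation of any line through both.
   Within one cell this follows from the arrows v_{k+ell} -> v_{k-1} -> v_k of (C2)-(C4), as the
   column and row orientations of a cell of a partial multiplication matrix agree.  Two distinct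
   cells on a common line are neighbours on the cycle G_M, because each line carries only two
   non-zero cells; a single further arrow then links the two points.  Hence after deleting v_i
   the points v_{i+1},...,v_n precede v_1,...,v_{i-1} on every line, which is the M-sum. *)

lemma in_col_unique:
  fixes v :: "nat \<Rightarrow> real"
  assumes mono: "\<forall>k<m. v k \<le> v (Suc k)"
    and "i \<in> {1..m}" "i' \<in> {1..m}" "in_col v i x" "in_col v i' x"
  shows "i = i'"
proof -
  have "v (min k m) \<le> v (min (Suc k) m)" for k
    using mono by (cases "k < m") (auto simp: min_def)
  then have le: "v a \<le> v b" if "a \<le> b" "b \<le> m" for a b
    using lift_Suc_mono_le[of "\<lambda>k. v (min k m)" a b] that by simp
  have "\<not> i < i'" if "in_col v i x" "in_col v i' x" "i \<in> {1..m}" "i' \<in> {1..m}" for i i'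
  proof
    assume "i < i'"
    with that have "v i \<le> v (i' - 1)"
      by (intro le) auto
    with that show False
      unfolding in_col_def by auto
  qed
  then show ?thesis
    using assms by (meson linorder_neqE_nat)
qed

lemma in_row_iff_in_col: "in_row h \<pi> j x \<longleftrightarrow> in_col h j (\<pi> x)"
  unfolding in_row_def in_col_def ..

lemma gridded_perm_in_col_unique:
  "gridded_perm m nr M L \<pi> v h \<Longrightarrow> i \<in> {1..m} \<Longrightarrow> i' \<in> {1..m} \<Longrightarrow>
    in_col v i x \<Longrightarrow> in_col v i' x \<Longrightarrow> i = i'"
  unfolding gridded_perm_def using in_col_unique[of m v] by blast

lemma gridded_perm_in_row_unique:
  "gridded_perm m nr M L \<pi> v h \<Longrightarrow> j \<in> {1..nr} \<Longrightarrow> j' \<in> {1..nr} \<Longrightarrow>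
    in_row h \<pi> j x \<Longrightarrow> in_row h \<pi> j' x \<Longrightarrow> j = j'"
  unfolding gridded_perm_def in_row_iff_in_col using in_col_unique[of nr h] by blast

(* A non-zero cell (i, j) is the edge of G_M between the column vertex Inl i and the row vertex
   Inr j; these are the two lines through it. *)
definition cell_lines :: "nat \<times> nat \<Rightarrow> (nat + nat) set" where
  "cell_lines e = {Inl (fst e), Inr (snd e)}"

definition line_prec ::
  "(nat \<Rightarrow> int) \<Rightarrow> (nat \<Rightarrow> int) \<Rightarrow> (nat \<Rightarrow> nat) \<Rightarrow> nat + nat \<Rightarrow> nat \<Rightarrow> nat \<Rightarrow> bool"
where
  "line_prec c r \<pi> w x y =
     (case w of Inl i \<Rightarrow> col_prec c i x y | Inr j \<Rightarrow> row_prec r \<pi> j x y)"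

lemma line_prec_trans:
  "line_prec c r \<pi> w x y \<Longrightarrow> line_prec c r \<pi> w y z \<Longrightarrow> line_prec c r \<pi> w x z"
  by (cases w) (auto simp: line_prec_def col_prec_def row_prec_def split: if_splits)

lemma cell_lines_Int_unique:
  "e \<noteq> f \<Longrightarrow> w \<in> cell_lines e \<inter> cell_lines f \<Longrightarrow> w' \<in> cell_lines e \<inter> cell_lines f \<Longrightarrow>
    w = w'"
  unfolding cell_lines_def by (auto simp: prod_eq_iff)

lemma gridded_perm_col_prec_iff_row_prec:
  assumes gp: "gridded_perm m nr M L \<pi> v h" and pmm: "partial_mult_matrix m nr M c r"
    and e: "(i, j) \<in> nz_cells m nr M"
    and xy: "x \<in> {1..L}" "y \<in> {1..L}" "x \<noteq> y" "in_cell v h \<pi> i j x" "in_cell v h \<pi> i j y"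
  shows "col_prec c i x y \<longleftrightarrow> row_prec r \<pi> j x y"
proof -
  from e have ij: "i \<in> {1..m}" "j \<in> {1..nr}" "M i j \<noteq> 0"
    by (auto simp: nz_cells_def)
  with pmm have "M i j = c i * r j" "c i \<in> {1, -1}" "r j \<in> {1, -1}"
    by (auto simp: partial_mult_matrix_def)
  moreover have "\<pi> x \<noteq> \<pi> y"
    using gp xy(3) unfolding gridded_perm_def by (metis permutes_inj injD)
  moreover have
    "x < y \<Longrightarrow> (M i j = 1 \<longrightarrow> \<pi> x < \<pi> y) \<and> (M i j = -1 \<longrightarrow> \<pi> y < \<pi> x)"
    "y < x \<Longrightarrow> (M i j = 1 \<longrightarrow> \<pi> y < \<pi> x) \<and> (M i j = -1 \<longrightarrow> \<pi> x < \<pi> y)"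
    using gp ij(1,2) xy unfolding gridded_perm_def by blast+
  ultimately show ?thesis
    using xy(3) unfolding col_prec_def row_prec_def by (cases "x < y") auto
qed

lemma gridded_perm_line_prec_cell_iff:
  assumes gp: "gridded_perm m nr M L \<pi> v h" and pmm: "partial_mult_matrix m nr M c r"
    and "e \<in> nz_cells m nr M" "x \<in> {1..L}" "y \<in> {1..L}" "x \<noteq> y"
    and "in_cell v h \<pi> (fst e) (snd e) x" "in_cell v h \<pi> (fst e) (snd e) y"
    and "w \<in> cell_lines e" "w' \<in> cell_lines e"
  shows "line_prec c r \<pi> w x y \<longleftrightarrow> line_prec c r \<pi> w' x y"
proof -
  obtain i j where "e = (i, j)"
    by fastforce
  with gridded_perm_col_prec_iff_row_prec[OF gp pmm] assms show ?thesis
    unfolding cell_lines_def line_prec_def by auto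
qed

lemma orient_arrow_common_line:
  assumes gp: "gridded_perm m nr M L \<pi> v h"
    and ef: "e \<in> nz_cells m nr M" "f \<in> nz_cells m nr M"
    and cells: "in_cell v h \<pi> (fst e) (snd e) x" "in_cell v h \<pi> (fst f) (snd f) y"
    and arrow: "orient_arrow m nr c r \<pi> v h x y"
  shows "\<exists>w \<in> cell_lines e \<inter> cell_lines f. line_prec c r \<pi> w x y"
  using arrow unfolding orient_arrow_def
proof (elim disjE bexE conjE)
  fix i assume "i \<in> {1..m}" "in_col v i x" "in_col v i y" "col_prec c i x y"
  moreover from this have "i = fst e" "i = fst f"
    using gridded_perm_in_col_unique[OF gp] ef cells by (auto simp: nz_cells_def in_cell_def)
  ultimately show ?thesis
    unfolding cell_lines_def line_prec_def by force
next
  fix j assume "j \<in> {1..nr}" "in_row h \<pi> j x" "in_row h \<pi> j y" "row_prec r \<pi> j x y"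
  moreover from this have "j = snd e" "j = snd f"
    using gridded_perm_in_row_unique[OF gp] ef cells by (auto simp: nz_cells_def in_cell_def)
  ultimately show ?thesis
    unfolding cell_lines_def line_prec_def by force
qed

lemma orient_arrow_along_common_line:
  assumes gp: "gridded_perm m nr M L \<pi> v h" and pmm: "partial_mult_matrix m nr M c r"
    and ef: "e \<in> nz_cells m nr M" "f \<in> nz_cells m nr M"
    and xy: "x \<in> {1..L}" "y \<in> {1..L}" "x \<noteq> y"
    and cells: "in_cell v h \<pi> (fst e) (snd e) x" "in_cell v h \<pi> (fst f) (snd f) y"
    and arrow: "orient_arrow m nr c r \<pi> v h x y"
    and w: "w \<in> cell_lines e \<inter> cell_lines f"
  shows "line_prec c r \<pi> w x y"
proof -
  obtain w' where w': "w' \<in> cell_lines e \<inter> cell_lines f" "line_prec c r \<pi> w' x y"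
    using orient_arrow_common_line[OF gp ef cells arrow] by blast
  show ?thesis
  proof (cases "e = f")
    case True
    with w w' gridded_perm_line_prec_cell_iff[OF gp pmm ef(1) xy] cells show ?thesis
      by blast
  next
    case False
    with w w' cell_lines_Int_unique show ?thesis
      by metis
  qed
qed

lemma rc_adj_Inl:
  "i \<in> {1..m} \<Longrightarrow> {b. rc_adj m nr M (Inl i) b} = Inr ` {j \<in> {1..nr}. M i j \<noteq> 0}"
  unfolding rc_adj_def by auto

lemma rc_adj_Inr:
  "j \<in> {1..nr} \<Longrightarrow> {b. rc_adj m nr M (Inr j) b} = Inl ` {i \<in> {1..m}. M i j \<noteq> 0}"
  unfolding rc_adj_def by auto

lemma rc_graph_is_cycle_card_col:
  assumes "rc_graph_is_cycle m nr M" "i \<in> {1..m}"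
  shows "card {j \<in> {1..nr}. M i j \<noteq> 0} = 2"
proof -
  have "card {b. rc_adj m nr M (Inl i) b} = 2"
    using assms unfolding rc_graph_is_cycle_def rc_vertices_def by blast
  then show ?thesis
    using assms(2) by (simp add: rc_adj_Inl card_image)
qed

lemma rc_graph_is_cycle_card_row:
  assumes "rc_graph_is_cycle m nr M" "j \<in> {1..nr}"
  shows "card {i \<in> {1..m}. M i j \<noteq> 0} = 2"
proof -
  have "card {b. rc_adj m nr M (Inr j) b} = 2"
    using assms unfolding rc_graph_is_cycle_def rc_vertices_def by blast
  then show ?thesis
    using assms(2) by (simp add: rc_adj_Inr card_image)
qed

lemma finite_nz_cells: "finite (nz_cells m nr M)"
  by (rule finite_subset[of _ "{1..m} \<times> {1..nr}"]) (auto simp: nz_cells_def)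

lemma rc_graph_is_cycle_card_cell_neighbours:
  assumes cyc: "rc_graph_is_cycle m nr M" and e: "e \<in> nz_cells m nr M"
  shows "card {f \<in> nz_cells m nr M. f \<noteq> e \<and> cell_lines e \<inter> cell_lines f \<noteq> {}} \<le> 2"
proof -
  obtain i j where ij: "e = (i, j)" "i \<in> {1..m}" "j \<in> {1..nr}" "M i j \<noteq> 0"
    using e by (auto simp: nz_cells_def)
  let ?C = "{j' \<in> {1..nr}. M i j' \<noteq> 0} - {j}" and ?R = "{i' \<in> {1..m}. M i' j \<noteq> 0} - {i}"
  have "card {f \<in> nz_cells m nr M. f \<noteq> e \<and> cell_lines e \<inter> cell_lines f \<noteq> {}}
      \<le> card (Pair i ` ?C \<union> (\<lambda>i'. (i', j)) ` ?R)"
    by (rule card_mono) (auto simp: ij cell_lines_def nz_cells_def)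
  also have "\<dots> \<le> card (Pair i ` ?C) + card ((\<lambda>i'. (i', j)) ` ?R)"
    by (rule card_Un_le)
  also have "\<dots> \<le> card ?C + card ?R"
    by (intro add_mono card_image_le) auto
  also have "\<dots> = 2"
    using rc_graph_is_cycle_card_col[OF cyc ij(2)] rc_graph_is_cycle_card_row[OF cyc ij(3)] ij
    by (simp add: card_Diff_singleton)
  finally show ?thesis .
qed

lemma rc_graph_is_cycle_length_ge_3:
  assumes cyc: "rc_graph_is_cycle m nr M"
  shows "3 \<le> cycle_length m nr M"
proof -
  have other: "\<exists>b \<in> S. b \<noteq> a" if "card S = 2" for S and a :: nat
    using that by (auto simp: card_2_iff)
  obtain i j where ij: "i \<in> {1..m}" "j \<in> {1..nr}" "M i j \<noteq> 0"
  proof -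
    obtain a where "a \<in> rc_vertices m nr"
      using cyc unfolding rc_graph_is_cycle_def by blast
    then consider i where "i \<in> {1..m}" | j where "j \<in> {1..nr}"
      unfolding rc_vertices_def by blast
    then show thesis
    proof cases
      case (1 i)
      then show thesis
        using that other[OF rc_graph_is_cycle_card_col[OF cyc 1], of 0] by blast
    next
      case (2 j)
      then show thesis
        using that other[OF rc_graph_is_cycle_card_row[OF cyc 2], of 0] by blast
    qed
  qed
  obtain j' where j': "j' \<in> {1..nr}" "M i j' \<noteq> 0" "j' \<noteq> j"
    using other[OF rc_graph_is_cycle_card_col[OF cyc ij(1)], of j] by blast
  obtain i' where i': "i' \<in> {1..m}" "M i' j \<noteq> 0" "i' \<noteq> i"
    using other[OF rc_graph_is_cycle_card_row[OF cyc ij(2)], of i] by blast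
  have "card {(i, j), (i, j'), (i', j)} \<le> cycle_length m nr M"
    unfolding cycle_length_def
    by (rule card_mono[OF finite_nz_cells]) (use ij i' j' in \<open>auto simp: nz_cells_def\<close>)
  moreover have "card {(i, j), (i, j'), (i', j)} = 3"
    using i' j' by auto
  ultimately show ?thesis
    by simp
qed

lemma M_divisible_onI:
  "is_M_sum_on m nr c r \<pi> v h Q S T \<Longrightarrow> S \<noteq> {} \<Longrightarrow> T \<noteq> {} \<Longrightarrow>
    M_divisible_on m nr c r \<pi> v h Q"
  unfolding M_divisible_on_def by blast

lemma image_split_at:
  fixes p :: "nat \<Rightarrow> 'a" and i L :: nat
  assumes "inj_on p {1..L}" "i \<in> {1..L}"
  shows "p ` {i+1..L} \<inter> p ` {1..i-1} = {}"
    and "p ` {i+1..L} \<union> p ` {1..i-1} = p ` {1..L} - {p i}"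
proof -
  have "p ` ({i+1..L} \<inter> {1..i-1}) = p ` {i+1..L} \<inter> p ` {1..i-1}"
    by (rule inj_on_image_Int[OF assms(1)]) (use assms(2) in auto)
  then show "p ` {i+1..L} \<inter> p ` {1..i-1} = {}"
    by auto
  have "{i+1..L} \<union> {1..i-1} = {1..L} - {i}"
    using assms(2) by auto
  then have "p ` {i+1..L} \<union> p ` {1..i-1} = p ` ({1..L} - {i})"
    by (metis image_Un)
  also have "\<dots> = p ` {1..L} - {p i}"
    using inj_on_image_set_diff[OF assms(1), of "{1..L}" "{i}"] assms(2) by simp
  finally show "p ` {i+1..L} \<union> p ` {1..i-1} = p ` {1..L} - {p i}" .
qed

locale coil =
  fixes m nr :: nat and M :: "nat \<Rightarrow> nat \<Rightarrow> int" and c r :: "nat \<Rightarrow> int"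
    and L :: nat and \<pi> p :: "nat \<Rightarrow> nat" and v h :: "nat \<Rightarrow> real" and lab :: "nat \<Rightarrow> nat \<times> nat"
  assumes pmm: "partial_mult_matrix m nr M c r"
    and cycle: "rc_graph_is_cycle m nr M"
    and coil: "gridded_coil m nr M c r L \<pi> v h p lab"
begin

abbreviation "ell \<equiv> cycle_length m nr M"

abbreviation "arrow \<equiv> orient_arrow m nr c r \<pi> v h"

abbreviation precedes :: "nat + nat \<Rightarrow> nat \<Rightarrow> nat \<Rightarrow> bool" where
  "precedes w a b \<equiv> line_prec c r \<pi> w (p a) (p b)"

definition cell_of :: "nat \<Rightarrow> nat \<times> nat" where
  "cell_of k = lab ((k - 1) mod ell + 1)"

lemma gridded: "gridded_perm m nr M L \<pi> v h"
  and ell_less: "ell < L"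
  and p_bij: "bij_betw p {1..L} {1..L}"
  and lab_bij: "bij_betw lab {1..ell} (nz_cells m nr M)"
  and point_in_cell: "k \<in> {1..L} \<Longrightarrow> in_cell v h \<pi> (fst (cell_of k)) (snd (cell_of k)) (p k)"
  and arrow_Suc: "1 \<le> k \<Longrightarrow> k < L \<Longrightarrow> arrow (p k) (p (k + 1))"
  and arrow_back: "1 \<le> k \<Longrightarrow> k + ell + 1 \<le> L \<Longrightarrow> arrow (p (k + ell + 1)) (p k)"
  and arrow_wrap: "arrow (p (ell + 1)) (p 1)"
  using coil unfolding gridded_coil_def Let_def cell_of_def
  by (auto dest: spec[of _ "k + 1"] spec[of _ "k + ell + 1"])

lemma ell_ge_3: "3 \<le> ell"
  using rc_graph_is_cycle_length_ge_3[OF cycle] .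

lemma cell_index_mem: "(k - 1) mod ell + 1 \<in> {1..ell}"
  using ell_ge_3 by (simp add: Suc_leI)

lemma cell_of_nz: "cell_of k \<in> nz_cells m nr M"
  using lab_bij cell_index_mem unfolding cell_of_def bij_betw_def by blast

lemma p_inj: "inj_on p {1..L}"
  using p_bij by (rule bij_betw_imp_inj_on)

lemma arrow_common_line:
  "a \<in> {1..L} \<Longrightarrow> b \<in> {1..L} \<Longrightarrow> arrow (p a) (p b) \<Longrightarrow>
    \<exists>w \<in> cell_lines (cell_of a) \<inter> cell_lines (cell_of b). precedes w a b"
  using orient_arrow_common_line[OF gridded cell_of_nz cell_of_nz point_in_cell point_in_cell] .

lemma arrow_along:
  assumes "a \<in> {1..L}" "b \<in> {1..L}" "a \<noteq> b" "arrow (p a) (p b)"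
    and "w \<in> cell_lines (cell_of a) \<inter> cell_lines (cell_of b)"
  shows "precedes w a b"
proof -
  have "p a \<in> {1..L}" "p b \<in> {1..L}" "p a \<noteq> p b"
    using assms(1-3) p_bij p_inj by (auto simp: bij_betw_def inj_on_eq_iff)
  then show ?thesis
    using orient_arrow_along_common_line[OF gridded pmm cell_of_nz cell_of_nz] assms point_in_cell
    by blast
qed

lemma precedes_same_cell_iff:
  assumes "a \<in> {1..L}" "b \<in> {1..L}" "a \<noteq> b" "cell_of a = cell_of b"
    and "w \<in> cell_lines (cell_of a)" "w' \<in> cell_lines (cell_of a)"
  shows "precedes w a b \<longleftrightarrow> precedes w' a b"
proof -
  have "p a \<in> {1..L}" "p b \<in> {1..L}" "p a \<noteq> p b"
    using assms(1-3) p_bij p_inj by (auto simp: bij_betw_def inj_on_eq_iff)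
  then show ?thesis
    using gridded_perm_line_prec_cell_iff[OF gridded pmm cell_of_nz] assms point_in_cell
    by metis
qed

lemma cell_of_eq_iff:
  assumes "1 \<le> a" "1 \<le> b"
  shows "cell_of a = cell_of b \<longleftrightarrow> a mod ell = b mod ell"
proof -
  have "inj_on lab {1..ell}"
    using lab_bij by (rule bij_betw_imp_inj_on)
  then have "cell_of a = cell_of b \<longleftrightarrow> (a - 1) mod ell = (b - 1) mod ell"
    unfolding cell_of_def using cell_index_mem by (simp add: inj_on_eq_iff)
  also have "\<dots> \<longleftrightarrow> Suc (a - 1) mod ell = Suc (b - 1) mod ell"
    by (simp add: nat_mod_eq_iff)
  finally show ?thesis
    using assms by simp
qed

lemma cell_of_add_period [simp]: "1 \<le> a \<Longrightarrow> cell_of (a + t * ell) = cell_of a"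
  by (simp add: cell_of_eq_iff)

lemma cell_of_add_ell [simp]: "1 \<le> a \<Longrightarrow> cell_of (a + ell) = cell_of a"
  by (simp add: cell_of_eq_iff)

lemma cell_of_Suc_ell [simp]: "cell_of (Suc ell) = cell_of 1"
  using cell_of_add_ell[of 1] by (simp only: Suc_eq_plus1_left order_refl)

lemma cell_of_eqE:
  assumes "cell_of a = cell_of b" "1 \<le> a" "a \<le> b"
  obtains t where "b = a + t * ell"
proof -
  have "a mod ell = b mod ell"
    using assms cell_of_eq_iff by simp
  then obtain s where "b = a + ell * s"
    using assms(3) by (rule mod_eq_nat2E)
  then show thesis
    using that by (metis mult.commute)
qed

lemma cell_of_neq:
  assumes "1 \<le> a" "a < b" "b < a + ell"
  shows "cell_of a \<noteq> cell_of b"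
proof
  assume "cell_of a = cell_of b"
  then obtain t where "b = a + t * ell"
    using assms by (auto elim: cell_of_eqE)
  with assms show False
    by (cases t) auto
qed

lemma cell_of_Suc_cong:
  "1 \<le> a \<Longrightarrow> 1 \<le> b \<Longrightarrow> cell_of a = cell_of b \<Longrightarrow> cell_of (a + 1) = cell_of (b + 1)"
  by (simp add: cell_of_eq_iff) (metis mod_Suc_eq)

lemma consecutive_cells_share_line:
  assumes "1 \<le> k"
  shows "cell_lines (cell_of k) \<inter> cell_lines (cell_of (k + 1)) \<noteq> {}"
proof -
  let ?q = "(k - 1) mod ell + 1"
  have q: "?q \<in> {1..L}" "?q + 1 \<in> {1..L}"
    using cell_index_mem[of k] ell_less by auto
  have "cell_of ?q = cell_of k"
    using assms by (simp add: cell_of_eq_iff mod_Suc_eq)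
  moreover from this have "cell_of (?q + 1) = cell_of (k + 1)"
    using assms by (intro cell_of_Suc_cong) auto
  ultimately show ?thesis
    using arrow_common_line[OF q arrow_Suc] q by fastforce
qed

lemma cells_sharing_line_adjacent:
  assumes ab: "1 \<le> a" "1 \<le> b" "cell_of a \<noteq> cell_of b"
    and share: "cell_lines (cell_of a) \<inter> cell_lines (cell_of b) \<noteq> {}"
  shows "cell_of b = cell_of (a + 1) \<or> cell_of a = cell_of (b + 1)"
proof (rule ccontr)
  assume not_adjacent: "\<not> ?thesis"
  \<comment> \<open>cyclic predecessor of a; a - 1 would give the junk value cell_of 0 when a = 1\<close>
  let ?a' = "a + ell - 1"
  let ?N = "{f \<in> nz_cells m nr M. f \<noteq> cell_of a \<and> cell_lines (cell_of a) \<inter> cell_lines f \<noteq> {}}"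
  have a': "1 \<le> ?a'" "cell_of (?a' + 1) = cell_of a"
    using ell_ge_3 ab by simp_all
  then have "cell_of b \<noteq> cell_of ?a'"
    using not_adjacent cell_of_Suc_cong[OF ab(2)] by metis
  moreover have "cell_of (a + 1) \<noteq> cell_of ?a'" "cell_of a \<noteq> cell_of (a + 1)" "cell_of a \<noteq> cell_of ?a'"
    using cell_of_neq ell_ge_3 ab by auto
  ultimately have "card {cell_of b, cell_of (a + 1), cell_of ?a'} = 3"
    using not_adjacent by auto
  moreover have "{cell_of b, cell_of (a + 1), cell_of ?a'} \<subseteq> ?N"
    using consecutive_cells_share_line[of a] consecutive_cells_share_line[OF a'(1)] a'(2)
      cell_of_nz ab share \<open>cell_of a \<noteq> cell_of (a + 1)\<close> \<open>cell_of a \<noteq> cell_of ?a'\<close>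
    by (auto simp: Int_commute)
  then have "card {cell_of b, cell_of (a + 1), cell_of ?a'} \<le> card ?N"
    by (intro card_mono) (auto intro: finite_subset[OF _ finite_nz_cells])
  ultimately show False
    using rc_graph_is_cycle_card_cell_neighbours[OF cycle cell_of_nz[of a]] by simp
qed

lemma precedes_period_step:
  assumes "1 \<le> k" "k + ell \<le> L" "w \<in> cell_lines (cell_of k)"
  shows "precedes w (k + ell) k"
proof (cases "k = 1")
  case True
  with assms arrow_wrap ell_less ell_ge_3 show ?thesis
    by (intro arrow_along) (auto simp: add.commute)
next
  case False
  with assms have k: "1 \<le> k - 1" "k - 1 + 1 = k" "k - 1 + ell + 1 = k + ell"
    by auto
  obtain w' where w': "w' \<in> cell_lines (cell_of (k - 1)) \<inter> cell_lines (cell_of k)"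
    using consecutive_cells_share_line[OF k(1)] k(2) by auto
  have "precedes w' (k + ell) (k - 1)"
    using arrow_back[OF k(1)] k w' assms by (intro arrow_along) auto
  moreover have "precedes w' (k - 1) k"
    using arrow_Suc[OF k(1)] k w' assms by (intro arrow_along) auto
  ultimately have "precedes w' (k + ell) k"
    by (rule line_prec_trans)
  with precedes_same_cell_iff[of "k + ell" k w' w] w' assms ell_ge_3 show ?thesis
    by auto
qed

lemma precedes_period_down:
  assumes "1 \<le> a" "w \<in> cell_lines (cell_of a)"
  shows "a + t * ell \<le> L \<Longrightarrow> precedes w b (a + t * ell) \<Longrightarrow> precedes w b a"
proof (induction t)
  case (Suc t)
  have "precedes w b (a + t * ell + ell)"
    using Suc.prems(2) by (simp add: algebra_simps)
  moreover have "precedes w (a + t * ell + ell) (a + t * ell)"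
    using Suc.prems assms by (intro precedes_period_step) auto
  ultimately have "precedes w b (a + t * ell)"
    by (rule line_prec_trans)
  with Suc show ?case
    by simp
qed simp

lemma precedes_period_up:
  assumes "1 \<le> a" "w \<in> cell_lines (cell_of a)"
  shows "a + t * ell \<le> L \<Longrightarrow> precedes w a b \<Longrightarrow> precedes w (a + t * ell) b"
proof (induction t)
  case (Suc t)
  have "precedes w (a + t * ell + ell) (a + t * ell)"
    using Suc.prems assms by (intro precedes_period_step) auto
  moreover have "precedes w (a + t * ell) b"
    using Suc by simp
  ultimately have "precedes w (a + t * ell + ell) b"
    by (rule line_prec_trans)
  then show ?case
    by (simp add: algebra_simps)
qed simp

lemma precedes_same_cell:
  assumes "1 \<le> y" "y < x" "x \<le> L" "cell_of x = cell_of y" "w \<in> cell_lines (cell_of y)"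
  shows "precedes w x y"
proof -
  obtain t where "x = y + t * ell"
    by (rule cell_of_eqE[OF assms(4)[symmetric]]) (use assms in auto)
  with assms obtain t' where x: "x = (y + ell) + t' * ell"
    by (cases t) auto
  have "precedes w (y + ell) y"
    using assms x by (intro precedes_period_step) auto
  then show ?thesis
    using assms x precedes_period_up[of "y + ell" w t' y] by simp
qed

lemma precedes_next_cell:
  assumes "1 \<le> y" "y + 2 \<le> x" "x \<le> L" "cell_of x = cell_of (y + 1)"
    and "w \<in> cell_lines (cell_of x) \<inter> cell_lines (cell_of y)"
  shows "precedes w x y"
proof -
  obtain t where "x = y + 1 + t * ell"
    by (rule cell_of_eqE[OF assms(4)[symmetric]]) (use assms in auto)
  with assms obtain t' where x: "x = (y + t' * ell) + ell + 1"
    by (cases t) auto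
  have "precedes w x (y + t' * ell)"
    using arrow_back[of "y + t' * ell"] assms x by (intro arrow_along) auto
  then show ?thesis
    using assms x precedes_period_down[of y w t' x] by simp
qed

lemma precedes_prev_cell:
  assumes "1 \<le> y" "y + 2 \<le> x" "x \<le> L" "cell_of y = cell_of (x + 1)"
    and w: "w \<in> cell_lines (cell_of x) \<inter> cell_lines (cell_of y)"
  shows "precedes w x y"
proof -
  obtain t where t: "x + 1 = y + t * ell"
    using assms by (elim cell_of_eqE) auto
  show ?thesis
  proof (cases "y = 1")
    case False
    with assms t have y': "1 \<le> y - 1" "y - 1 + 1 = y" "x = (y - 1) + t * ell"
      by auto
    then have cell_x: "cell_of x = cell_of (y - 1)"
      by (simp only: cell_of_add_period)
    have "precedes w (y - 1) y"
      using arrow_Suc[OF y'(1)] assms y' cell_x by (intro arrow_along) auto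
    then have "precedes w (y - 1 + t * ell) y"
      using assms y' cell_x by (intro precedes_period_up) auto
    then show ?thesis
      using y'(3) by simp
  next
    case True
    \<comment> \<open>the step into v_1 is the wrap-around arrow v_{ell+1} \<rightarrow> v_1 of (C4)\<close>
    with assms t obtain t' where x: "x = ell + t' * ell"
      by (cases t) auto
    have "precedes w ell (ell + 1)"
      using arrow_Suc[of ell] ell_less ell_ge_3 True assms x by (intro arrow_along) auto
    moreover have "precedes w (1 + ell) 1"
      using True ell_less w x by (intro precedes_period_step) auto
    ultimately have "precedes w ell 1"
      by (simp add: add.commute line_prec_trans)
    then show ?thesis
      using True ell_ge_3 w x precedes_period_up[of ell w t' 1] assms by simp
  qed
qed

lemma later_precedes_earlier:
  assumes "1 \<le> y" "y + 2 \<le> x" "x \<le> L"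
    and "w \<in> cell_lines (cell_of x) \<inter> cell_lines (cell_of y)"
  shows "precedes w x y"
proof -
  consider "cell_of x = cell_of y" | "cell_of y = cell_of (x + 1)" | "cell_of x = cell_of (y + 1)"
    using cells_sharing_line_adjacent[of x y] assms by force
  then show ?thesis
    using assms precedes_same_cell precedes_prev_cell precedes_next_cell by cases auto
qed

lemma line_of_point:
  assumes "k \<in> {1..L}"
  shows "i \<in> {1..m} \<Longrightarrow> in_col v i (p k) \<Longrightarrow> Inl i \<in> cell_lines (cell_of k)"
    and "j \<in> {1..nr} \<Longrightarrow> in_row h \<pi> j (p k) \<Longrightarrow> Inr j \<in> cell_lines (cell_of k)"
proof -
  have "fst (cell_of k) \<in> {1..m}" "snd (cell_of k) \<in> {1..nr}"
    using cell_of_nz[of k] by (auto simp: nz_cells_def)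
  moreover have "in_col v (fst (cell_of k)) (p k)" "in_row h \<pi> (snd (cell_of k)) (p k)"
    using point_in_cell[OF assms] by (simp_all add: in_cell_def)
  ultimately show "i \<in> {1..m} \<Longrightarrow> in_col v i (p k) \<Longrightarrow> Inl i \<in> cell_lines (cell_of k)"
    and "j \<in> {1..nr} \<Longrightarrow> in_row h \<pi> j (p k) \<Longrightarrow> Inr j \<in> cell_lines (cell_of k)"
    using gridded_perm_in_col_unique[OF gridded] gridded_perm_in_row_unique[OF gridded]
    unfolding cell_lines_def by blast+
qed

lemma split_is_M_sum:
  assumes "1 < i" "i < L"
  shows "is_M_sum_on m nr c r \<pi> v h ({1..L} - {p i}) (p ` {i+1..L}) (p ` {1..i-1})"
proof -
  have ranges: "{i+1..L} \<subseteq> {1..L}" "{1..i-1} \<subseteq> {1..L}"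
    using assms by auto
  have partition:
    "p ` {i+1..L} \<inter> p ` {1..i-1} = {}" "p ` {i+1..L} \<union> p ` {1..i-1} = {1..L} - {p i}"
    using image_split_at[OF p_inj, of i] assms p_bij by (auto simp: bij_betw_def)
  have later: "precedes w x y"
    if "x \<in> {i+1..L}" "y \<in> {1..i-1}" "w \<in> cell_lines (cell_of x) \<inter> cell_lines (cell_of y)"
    for w x y
    using that assms by (intro later_precedes_earlier) auto
  have cols: "col_prec c j (p x) (p y)"
    if "x \<in> {i+1..L}" "y \<in> {1..i-1}" "j \<in> {1..m}" "in_col v j (p x)" "in_col v j (p y)"
    for x y j
  proof -
    have "Inl j \<in> cell_lines (cell_of x) \<inter> cell_lines (cell_of y)"
      using line_of_point(1)[OF _ that(3)] that(1,2,4,5) ranges by blast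
    from later[OF that(1,2) this] show ?thesis
      by (simp add: line_prec_def)
  qed
  have rows: "row_prec r \<pi> j (p x) (p y)"
    if "x \<in> {i+1..L}" "y \<in> {1..i-1}" "j \<in> {1..nr}" "in_row h \<pi> j (p x)" "in_row h \<pi> j (p y)"
    for x y j
  proof -
    have "Inr j \<in> cell_lines (cell_of x) \<inter> cell_lines (cell_of y)"
      using line_of_point(2)[OF _ that(3)] that(1,2,4,5) ranges by blast
    from later[OF that(1,2) this] show ?thesis
      by (simp add: line_prec_def)
  qed
  show ?thesis
    unfolding is_M_sum_on_def using partition by (auto intro!: cols rows)
qed

end

theorem lemma3p9:
  fixes m nr L :: nat and M :: "nat \<Rightarrow> nat \<Rightarrow> int" and c r :: "nat \<Rightarrow> int"
    and \<pi> p :: "nat \<Rightarrow> nat" and v h :: "nat \<Rightarrow> real" and lab :: "nat \<Rightarrow> nat \<times> nat"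
    and i :: nat
  assumes "gridding_matrix m nr M"
    and "partial_mult_matrix m nr M c r"
    and "rc_graph_is_cycle m nr M"
    and "gridded_coil m nr M c r L \<pi> v h p lab"
    and "1 < i" and "i < L"
  shows "M_divisible_on m nr c r \<pi> v h ({1..L} - {p i}) \<and>
         is_M_sum_on m nr c r \<pi> v h ({1..L} - {p i}) (p ` {i+1..L}) (p ` {1..i-1})"
proof -
  \<comment> \<open>the entry bound of gridding_matrix is never needed, only the signs c, r\<close>
  interpret coil m nr M c r L \<pi> p v h lab
    using assms(2-4) by unfold_locales
  have "is_M_sum_on m nr c r \<pi> v h ({1..L} - {p i}) (p ` {i+1..L}) (p ` {1..i-1})"
    using split_is_M_sum assms(5,6) .
  moreover have "p ` {i+1..L} \<noteq> {}" "p ` {1..i-1} \<noteq> {}"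
    using assms(5,6) by simp_all
  ultimately show ?thesis
    by (intro conjI M_divisible_onI)
qed

end
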